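(* Let $L,L'$ be finite simplicial complexes, $\varphi: L\to L'$ a surjective simplicial finite-fibration, and $n\ge2$. (i) If there is a simplicial map $\omega: L'\to L$ with $\varphi\circ\omega\sim 1_{L'}$ (a right strong equivalence), then $\mathrm{TC}_n(\varphi)=\mathrm{TC}_n(L')$. (ii) If there is a simplicial map $\gamma: L'\to L$ with $\gamma\circ\varphi\sim 1_L$ (a left strong equivalence), then $\mathrm{TC}_n(\varphi)=\mathrm{TC}_n(L)$. (iii) If $\varphi$ is a strong equivalence, then $\mathrm{TC}_n(\varphi)=\mathrm{TC}_n(L)=\mathrm{TC}_n(L')$.
   Context: Simplicial complexes are abstract and edge-path connected; $K^n$ is the $n$-fold categorical product (vertex set $\mathrm{VX}(K)^n$; a set of vertices is a simplex iff each coordinate projection is a simplex). Simplicial maps $f,g: K\to K'$ are contiguous if $f(\sigma)\cup g(\sigma)$ is a simplex for every simplex $\sigma$; $f\sim g$ if joined by a finite chain of contiguous simplicial maps. A strong equivalence $f: K\to K'$ is a simplicial map admitting a simplicial $g: K'\to K$ with $f\circ g\sim1_{K'}$ and $g\circ f\sim 1_K$. $\mathrm{SD}(\varphi_1,\dots,\varphi_m)$ for simplicial maps $K\to K'$ is the least $k\ge0$ such that $K$ is a union of subcomplexes $K_0,\dots,K_k$ with $\varphi_i|_{K_j}\sim\varphi_l|_{K_j}$ for all $i,l,j$. With $p_i: K^n\to K$ the projections, $\mathrm{TC}_n(K)=\mathrm{SD}(p_1,\dots,p_n)$ and, for surjective $\varphi: L\to L'$, $\mathrm{TC}_n(\varphi)=\mathrm{SD}(\varphi\circ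 p_1,\dots,\varphi\circ p_n)$ with $p_i: L^n\to L$. $I_m$ is the complex with vertices $0,\dots,m$ and edges $\{i,i+1\}$; $\varphi: L\to L'$ is a simplicial finite-fibration if for every finite complex $N$, $m\ge1$, inclusion $i: N\times\{0\}\to N\times I_m$ and simplicial $g: N\times\{0\}\to L$, $G: N\times I_m\to L'$ with $\varphi\circ g=G\circ i$, there is simplicial $\widetilde G$ with $\widetilde G\circ i=g$, $\varphi\circ\widetilde G=G$. *)

theory Defs
  imports Main
begin

definition VX :: "'a set set \<Rightarrow> 'a set" where
  "VX K = \<Union>K"

definition raw_complex :: "'a set set \<Rightarrow> bool" where
  "raw_complex K \<longleftrightarrow>
     (\<forall>\<sigma>\<in>K. finite \<sigma> \<and> \<sigma> \<noteq> {}) \<and>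
     (\<forall>\<sigma>\<in>K. \<forall>\<tau>. \<tau> \<subseteq> \<sigma> \<and> \<tau> \<noteq> {} \<longrightarrow> \<tau> \<in> K)"

definition edge_path_connected :: "'a set set \<Rightarrow> bool" where
  "edge_path_connected K \<longleftrightarrow>
     (\<forall>v\<in>VX K. \<forall>w\<in>VX K. (\<lambda>x y. {x, y} \<in> K)\<^sup>*\<^sup>* v w)"

text \<open>Standing assumption: simplicial complexes are (nonempty and) edge-path connected.\<close>
definition complex :: "'a set set \<Rightarrow> bool" where
  "complex K \<longleftrightarrow> raw_complex K \<and> K \<noteq> {} \<and> edge_path_connected K"

definition finite_complex :: "'a set set \<Rightarrow> bool" where
  "finite_complex K \<longleftrightarrow> complex K \<and> finite (VX K)"

definition subcomplex :: "'a set set \<Rightarrow> 'a set set \<Rightarrow> bool" where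
  "subcomplex M K \<longleftrightarrow> M \<subseteq> K \<and> raw_complex M"

definition simp_map :: "'a set set \<Rightarrow> 'b set set \<Rightarrow> ('a \<Rightarrow> 'b) \<Rightarrow> bool" where
  "simp_map K K' f \<longleftrightarrow> f ` VX K \<subseteq> VX K' \<and> (\<forall>\<sigma>\<in>K. f ` \<sigma> \<in> K')"

definition contiguous :: "'a set set \<Rightarrow> 'b set set \<Rightarrow> ('a \<Rightarrow> 'b) \<Rightarrow> ('a \<Rightarrow> 'b) \<Rightarrow> bool" where
  "contiguous K K' f g \<longleftrightarrow> simp_map K K' f \<and> simp_map K K' g \<and>
     (\<forall>\<sigma>\<in>K. f ` \<sigma> \<union> g ` \<sigma> \<in> K')"

definition simp_homot :: "'a set set \<Rightarrow> 'b set set \<Rightarrow> ('a \<Rightarrow> 'b) \<Rightarrow> ('a \<Rightarrow> 'b) \<Rightarrow> bool" where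
  "simp_homot K K' f g \<longleftrightarrow> simp_map K K' f \<and> (contiguous K K')\<^sup>*\<^sup>* f g"

definition strong_equivalence :: "'a set set \<Rightarrow> 'b set set \<Rightarrow> ('a \<Rightarrow> 'b) \<Rightarrow> bool" where
  "strong_equivalence K K' f \<longleftrightarrow> simp_map K K' f \<and>
     (\<exists>g. simp_map K' K g \<and> simp_homot K' K' (f \<circ> g) id \<and> simp_homot K K (g \<circ> f) id)"

definition SD :: "'a set set \<Rightarrow> 'b set set \<Rightarrow> ('a \<Rightarrow> 'b) list \<Rightarrow> nat" where
  "SD K K' phis = (LEAST k. \<exists>Ks :: nat \<Rightarrow> 'a set set.
      (\<forall>j\<le>k. subcomplex (Ks j) K) \<and> K = (\<Union>j\<le>k. Ks j) \<and>
      (\<forall>j\<le>k. \<forall>i<length phis. \<forall>l<length phis. simp_homot (Ks j) K' (phis ! i) (phis ! l)))"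

text \<open>n-fold categorical product K^n: vertices are lists of length n of vertices of K;
  a nonempty finite set of such lists is a simplex iff each coordinate projection is.\<close>
definition power_cx :: "'a set set \<Rightarrow> nat \<Rightarrow> 'a list set set" where
  "power_cx K n = {\<sigma>. finite \<sigma> \<and> \<sigma> \<noteq> {} \<and> (\<forall>x\<in>\<sigma>. length x = n) \<and>
                      (\<forall>i<n. (\<lambda>x. x ! i) ` \<sigma> \<in> K)}"

definition TC :: "nat \<Rightarrow> 'a set set \<Rightarrow> nat" where
  "TC n K = SD (power_cx K n) K (map (\<lambda>i. \<lambda>x. x ! i) [0..<n])"

definition TC_map :: "nat \<Rightarrow> 'a set set \<Rightarrow> 'b set set \<Rightarrow> ('a \<Rightarrow> 'b) \<Rightarrow> nat" where
  "TC_map n L L' \<phi> = SD (power_cx L n) L' (map (\<lambda>i. \<lambda>x. \<phi> (x ! i)) [0..<n])"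

definition prod_cx :: "'a set set \<Rightarrow> 'b set set \<Rightarrow> ('a \<times> 'b) set set" where
  "prod_cx K M = {\<sigma>. finite \<sigma> \<and> \<sigma> \<noteq> {} \<and> fst ` \<sigma> \<in> K \<and> snd ` \<sigma> \<in> M}"

definition Icx :: "nat \<Rightarrow> nat set set" where
  "Icx m = {{i} | i. i \<le> m} \<union> {{i, Suc i} | i. i < m}"

text \<open>Test complexes N are taken with vertices in nat
  (every finite complex is isomorphic to one on nat). N \<times> {0} is realised as
  prod_cx N {{0}}, and the inclusion into N \<times> I_m is the identity on pairs.\<close>
definition finite_fibration :: "'a set set \<Rightarrow> 'b set set \<Rightarrow> ('a \<Rightarrow> 'b) \<Rightarrow> bool" where
  "finite_fibration L L' \<phi> \<longleftrightarrow>
     (\<forall>(N :: nat set set) (m :: nat) (g :: nat \<times> nat \<Rightarrow> 'a) (G :: nat \<times> nat \<Rightarrow> 'b).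
        finite_complex N \<and> m \<ge> 1 \<and>
        simp_map (prod_cx N {{0}}) L g \<and> simp_map (prod_cx N (Icx m)) L' G \<and>
        (\<forall>v\<in>VX (prod_cx N {{0}}). \<phi> (g v) = G v)
        \<longrightarrow> (\<exists>G' :: nat \<times> nat \<Rightarrow> 'a. simp_map (prod_cx N (Icx m)) L G' \<and>
               (\<forall>v\<in>VX (prod_cx N {{0}}). G' v = g v) \<and>
               (\<forall>v\<in>VX (prod_cx N (Icx m)). \<phi> (G' v) = G v)))"

end

theory Submission
  imports Defs
begin

text \<open>Each of \<open>TC\<^sub>n(\<phi>) \<le> TC\<^sub>n(L')\<close>, \<open>TC\<^sub>n(\<phi>) \<le> TC\<^sub>n(L)\<close> and their converses comes from
  transporting an SD-cover: pulling a cover back along \<open>\<phi>\<^sup>n\<close> or \<open>\<omega>\<^sup>n\<close>, or post-composing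
  all maps of a cover with \<open>\<phi>\<close> or \<open>\<gamma>\<close>. Since a homotopy restricts to
  every subcomplex, \<open>\<phi> \<circ> \<omega> \<sim> 1\<close> and \<open>\<gamma> \<circ> \<phi> \<sim> 1\<close> turn the transported maps back into the
  projections.\<close>

lemma simp_mapI: "(\<And>\<sigma>. \<sigma> \<in> K \<Longrightarrow> f ` \<sigma> \<in> K') \<Longrightarrow> simp_map K K' f"
  unfolding simp_map_def VX_def by blast

lemma simp_map_comp: "simp_map A B h \<Longrightarrow> simp_map B C f \<Longrightarrow> simp_map A C (f \<circ> h)"
  unfolding simp_map_def image_comp[symmetric] by blast

lemma simp_map_subset: "simp_map K K' f \<Longrightarrow> N \<subseteq> K \<Longrightarrow> simp_map N K' f"
  unfolding simp_map_def VX_def by blast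

lemma contiguous_sym: "contiguous K K' f g \<Longrightarrow> contiguous K K' g f"
  by (auto simp: contiguous_def Un_commute)

lemma contiguous_subset: "contiguous K K' f g \<Longrightarrow> N \<subseteq> K \<Longrightarrow> contiguous N K' f g"
  unfolding contiguous_def using simp_map_subset by blast

lemma contiguous_comp_right:
  "simp_map A B h \<Longrightarrow> contiguous B C f g \<Longrightarrow> contiguous A C (f \<circ> h) (g \<circ> h)"
  unfolding contiguous_def by (metis simp_map_comp image_comp simp_map_def)

lemma contiguous_comp_left:
  "simp_map B C k \<Longrightarrow> contiguous A B f g \<Longrightarrow> contiguous A C (k \<circ> f) (k \<circ> g)"
  unfolding contiguous_def by (metis simp_map_comp image_Un image_comp simp_map_def)

lemma contiguous_if_eq_on_VX:
  "simp_map K K' f \<Longrightarrow> (\<And>x. x \<in> VX K \<Longrightarrow> g x = f x) \<Longrightarrow> contiguous K K' f g"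
  unfolding contiguous_def simp_map_def VX_def
  by (metis (no_types, lifting) Sup_upper Un_absorb image_cong subset_iff)

lemma simp_map_contiguous_chain:
  "(contiguous K K')\<^sup>*\<^sup>* f g \<Longrightarrow> simp_map K K' f \<Longrightarrow> simp_map K K' g"
  by (induction rule: rtranclp_induct) (auto simp: contiguous_def)

lemma simp_homot_sym: "simp_homot K K' f g \<Longrightarrow> simp_homot K K' g f"
proof -
  assume fg: "simp_homot K K' f g"
  have "symp (contiguous K K')\<^sup>*\<^sup>*"
    using contiguous_sym by (intro symp_rtranclp sympI)
  then show ?thesis
    using fg simp_map_contiguous_chain unfolding simp_homot_def by (blast dest: sympD)
qed

lemma simp_homot_trans: "simp_homot K K' f g \<Longrightarrow> simp_homot K K' g h \<Longrightarrow> simp_homot K K' f h"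
  unfolding simp_homot_def by (meson rtranclp_trans)

lemma simp_homot_if_eq_on_VX:
  "simp_map K K' f \<Longrightarrow> (\<And>x. x \<in> VX K \<Longrightarrow> g x = f x) \<Longrightarrow> simp_homot K K' f g"
  unfolding simp_homot_def using contiguous_if_eq_on_VX by blast

lemma simp_homot_subset: "simp_homot K K' f g \<Longrightarrow> N \<subseteq> K \<Longrightarrow> simp_homot N K' f g"
  unfolding simp_homot_def
  using simp_map_subset rtranclp_mono[of "contiguous K K'" "contiguous N K'"] contiguous_subset
  by blast

lemma simp_homot_comp_right:
  assumes "simp_map A B h" and "simp_homot B C f g"
  shows "simp_homot A C (f \<circ> h) (g \<circ> h)"
proof -
  have "(contiguous A C)\<^sup>*\<^sup>* (f \<circ> h) (g \<circ> h)" if "(contiguous B C)\<^sup>*\<^sup>* f g"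
    using that
    by induction (blast intro: rtranclp.rtrancl_into_rtrancl contiguous_comp_right[OF assms(1)])+
  then show ?thesis
    using assms simp_map_comp unfolding simp_homot_def by blast
qed

lemma simp_homot_comp_left:
  assumes "simp_map B C k" and "simp_homot A B f g"
  shows "simp_homot A C (k \<circ> f) (k \<circ> g)"
proof -
  have "(contiguous A C)\<^sup>*\<^sup>* (k \<circ> f) (k \<circ> g)" if "(contiguous A B)\<^sup>*\<^sup>* f g"
    using that
    by induction (blast intro: rtranclp.rtrancl_into_rtrancl contiguous_comp_left[OF assms(1)])+
  then show ?thesis
    using assms simp_map_comp unfolding simp_homot_def by blast
qed

lemma raw_complex_preimage:
  assumes "raw_complex A" and "raw_complex M"
  shows "raw_complex {\<sigma> \<in> A. h ` \<sigma> \<in> M}"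
  using assms unfolding raw_complex_def
  by (metis (no_types, lifting) image_is_empty image_mono mem_Collect_eq)

lemma raw_complex_power_cx:
  assumes "raw_complex K"
  shows "raw_complex (power_cx K n)"
  unfolding raw_complex_def
proof (intro conjI ballI allI impI)
  fix \<sigma> \<tau> assume \<sigma>: "\<sigma> \<in> power_cx K n" and \<tau>: "\<tau> \<subseteq> \<sigma> \<and> \<tau> \<noteq> {}"
  have "(\<lambda>x. x ! i) ` \<tau> \<in> K" if "i < n" for i
    using assms \<sigma> \<tau> that unfolding raw_complex_def power_cx_def
    by (metis (no_types, lifting) image_is_empty image_mono mem_Collect_eq)
  then show "\<tau> \<in> power_cx K n"
    using \<sigma> \<tau> finite_subset unfolding power_cx_def by blast
qed (auto simp: power_cx_def)

lemma length_if_in_VX_power_cx: "x \<in> VX (power_cx K n) \<Longrightarrow> length x = n"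
  unfolding VX_def power_cx_def by blast

lemma simp_map_nth_power_cx: "i < n \<Longrightarrow> simp_map (power_cx K n) K (\<lambda>x. x ! i)"
  by (rule simp_mapI) (auto simp: power_cx_def)

lemma simp_map_map_power_cx:
  assumes f: "simp_map K K' f"
  shows "simp_map (power_cx K n) (power_cx K' n) (map f)"
proof (rule simp_mapI)
  fix \<sigma> assume \<sigma>: "\<sigma> \<in> power_cx K n"
  have "(\<lambda>x. x ! i) ` map f ` \<sigma> = f ` (\<lambda>x. x ! i) ` \<sigma>" if "i < n" for i
    using \<sigma> that unfolding power_cx_def by (auto simp: image_image intro!: image_cong)
  moreover have "f ` (\<lambda>x. x ! i) ` \<sigma> \<in> K'" if "i < n" for i
    using \<sigma> f that unfolding power_cx_def simp_map_def by blast
  ultimately show "map f ` \<sigma> \<in> power_cx K' n"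
    using \<sigma> unfolding power_cx_def by auto
qed

definition sd_cover :: "'a set set \<Rightarrow> 'b set set \<Rightarrow> ('a \<Rightarrow> 'b) list \<Rightarrow> nat \<Rightarrow> bool" where
  "sd_cover K K' fs k \<longleftrightarrow> (\<exists>Ks :: nat \<Rightarrow> 'a set set.
      (\<forall>j\<le>k. subcomplex (Ks j) K) \<and> K = (\<Union>j\<le>k. Ks j) \<and>
      (\<forall>j\<le>k. \<forall>i<length fs. \<forall>l<length fs. simp_homot (Ks j) K' (fs ! i) (fs ! l)))"

text \<open>Comparing covers for every \<open>k\<close> avoids showing that a cover exists at all, which
  \<open>LEAST\<close> would otherwise require.\<close>

lemma SD_cong: "(\<And>k. sd_cover A C fs k \<longleftrightarrow> sd_cover B D gs k) \<Longrightarrow> SD A C fs = SD B D gs"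
  unfolding SD_def sd_cover_def[symmetric] by simp

lemma sd_cover_pullback:
  assumes A: "raw_complex A" and h: "simp_map A B h" and cover: "sd_cover B C fs k"
  shows "sd_cover A C (map (\<lambda>f. f \<circ> h) fs) k"
proof -
  obtain Ks where sub: "\<forall>j\<le>k. subcomplex (Ks j) B" and un: "B = (\<Union>j\<le>k. Ks j)"
    and hom: "\<forall>j\<le>k. \<forall>i<length fs. \<forall>l<length fs. simp_homot (Ks j) C (fs ! i) (fs ! l)"
    using cover unfolding sd_cover_def by blast
  define Ns where "Ns j = {\<sigma> \<in> A. h ` \<sigma> \<in> Ks j}" for j
  have "subcomplex (Ns j) A" if "j \<le> k" for j
    using raw_complex_preimage[OF A] sub that unfolding Ns_def subcomplex_def by blast
  moreover have "A = (\<Union>j\<le>k. Ns j)"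
    using h un unfolding Ns_def simp_map_def by blast
  moreover have "simp_homot (Ns j) C (fs ! i \<circ> h) (fs ! l \<circ> h)"
    if "j \<le> k" "i < length fs" "l < length fs" for j i l
  proof (rule simp_homot_comp_right)
    show "simp_map (Ns j) (Ks j) h"
      by (rule simp_mapI) (simp add: Ns_def)
  qed (use hom that in blast)
  ultimately show ?thesis
    unfolding sd_cover_def by (intro exI[of _ Ns]) simp
qed

lemma sd_cover_postcomp:
  assumes g: "simp_map C D g" and cover: "sd_cover A C fs k"
  shows "sd_cover A D (map (\<lambda>f. g \<circ> f) fs) k"
proof -
  obtain Ks where "\<forall>j\<le>k. subcomplex (Ks j) A" and "A = (\<Union>j\<le>k. Ks j)"
    and hom: "\<forall>j\<le>k. \<forall>i<length fs. \<forall>l<length fs. simp_homot (Ks j) C (fs ! i) (fs ! l)"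
    using cover unfolding sd_cover_def by blast
  moreover have "\<forall>j\<le>k. \<forall>i<length fs. \<forall>l<length fs. simp_homot (Ks j) D (g \<circ> fs ! i) (g \<circ> fs ! l)"
    using hom simp_homot_comp_left[OF g] by blast
  ultimately show ?thesis
    unfolding sd_cover_def by (intro exI[of _ Ks]) simp
qed

lemma sd_cover_homot:
  assumes cover: "sd_cover A C (map F xs) k"
    and homot: "\<And>x. x \<in> set xs \<Longrightarrow> simp_homot A C (F x) (G x)"
  shows "sd_cover A C (map G xs) k"
proof -
  obtain Ks where sub: "\<forall>j\<le>k. subcomplex (Ks j) A" and un: "A = (\<Union>j\<le>k. Ks j)"
    and hom: "\<forall>j\<le>k. \<forall>i<length xs. \<forall>l<length xs. simp_homot (Ks j) C (F (xs ! i)) (F (xs ! l))"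
    using cover unfolding sd_cover_def by (metis length_map nth_map)
  have "simp_homot (Ks j) C (G (xs ! i)) (G (xs ! l))"
    if j: "j \<le> k" and i: "i < length xs" and l: "l < length xs" for j i l
  proof -
    have "Ks j \<subseteq> A" using sub j by (simp add: subcomplex_def)
    then have "simp_homot (Ks j) C (F (xs ! m)) (G (xs ! m))" if "m < length xs" for m
      using homot[OF nth_mem[OF that]] simp_homot_subset by blast
    then show ?thesis
      using hom j i l by (metis simp_homot_sym simp_homot_trans)
  qed
  then show ?thesis
    using sub un unfolding sd_cover_def by (intro exI[of _ Ks]) simp
qed

lemma TC_map_eq_SD:
  "TC_map n L L' \<phi> = SD (power_cx L n) L' (map (\<lambda>i. \<phi> \<circ> (\<lambda>x. x ! i)) [0..<n])"
  by (simp add: TC_map_def comp_def)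

lemma TC_map_eq_TC_codomain:
  assumes L: "raw_complex L" and L': "raw_complex L'" and \<phi>: "simp_map L L' \<phi>"
    and \<omega>: "simp_map L' L \<omega>" and \<phi>\<omega>: "simp_homot L' L' (\<phi> \<circ> \<omega>) id"
  shows "TC_map n L L' \<phi> = TC n L'"
  unfolding TC_map_eq_SD TC_def
proof (rule SD_cong, rule iffI)
  fix k
  assume "sd_cover (power_cx L n) L' (map (\<lambda>i. \<phi> \<circ> (\<lambda>x. x ! i)) [0..<n]) k"
  from sd_cover_pullback[OF raw_complex_power_cx[OF L'] simp_map_map_power_cx[OF \<omega>] this]
  have cover: "sd_cover (power_cx L' n) L' (map (\<lambda>i. \<phi> \<circ> (\<lambda>x. x ! i) \<circ> map \<omega>) [0..<n]) k"
    by (simp add: comp_def)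
  have homot: "simp_homot (power_cx L' n) L' (\<phi> \<circ> (\<lambda>x. x ! i) \<circ> map \<omega>) (\<lambda>x. x ! i)"
    if i: "i < n" for i
  proof -
    have "simp_homot (power_cx L' n) L' (\<phi> \<circ> (\<lambda>x. x ! i) \<circ> map \<omega>) (\<phi> \<circ> \<omega> \<circ> (\<lambda>x. x ! i))"
      using i
      by (intro simp_homot_if_eq_on_VX simp_map_comp[OF simp_map_map_power_cx[OF \<omega>]]
          simp_map_comp[OF simp_map_nth_power_cx \<phi>]) (auto dest: length_if_in_VX_power_cx)
    moreover have "simp_homot (power_cx L' n) L' (\<phi> \<circ> \<omega> \<circ> (\<lambda>x. x ! i)) (id \<circ> (\<lambda>x. x ! i))"
      by (rule simp_homot_comp_right[OF simp_map_nth_power_cx[OF i] \<phi>\<omega>])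
    ultimately show ?thesis
      using simp_homot_trans by simp
  qed
  show "sd_cover (power_cx L' n) L' (map (\<lambda>i x. x ! i) [0..<n]) k"
    by (rule sd_cover_homot[OF cover]) (simp add: homot)
next
  fix k
  assume "sd_cover (power_cx L' n) L' (map (\<lambda>i x. x ! i) [0..<n]) k"
  from sd_cover_pullback[OF raw_complex_power_cx[OF L] simp_map_map_power_cx[OF \<phi>] this]
  have cover: "sd_cover (power_cx L n) L' (map (\<lambda>i. (\<lambda>x. x ! i) \<circ> map \<phi>) [0..<n]) k"
    by (simp add: comp_def)
  have homot: "simp_homot (power_cx L n) L' ((\<lambda>x. x ! i) \<circ> map \<phi>) (\<phi> \<circ> (\<lambda>x. x ! i))"
    if i: "i < n" for i
    using i
    by (intro simp_homot_if_eq_on_VX simp_map_comp[OF simp_map_map_power_cx[OF \<phi>]]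
        simp_map_nth_power_cx) (auto dest: length_if_in_VX_power_cx)
  show "sd_cover (power_cx L n) L' (map (\<lambda>i. \<phi> \<circ> (\<lambda>x. x ! i)) [0..<n]) k"
    by (rule sd_cover_homot[OF cover]) (simp add: homot)
qed

lemma TC_map_eq_TC_domain:
  assumes L: "raw_complex L" and \<phi>: "simp_map L L' \<phi>"
    and \<gamma>: "simp_map L' L \<gamma>" and \<gamma>\<phi>: "simp_homot L L (\<gamma> \<circ> \<phi>) id"
  shows "TC_map n L L' \<phi> = TC n L"
  unfolding TC_map_eq_SD TC_def
proof (rule SD_cong, rule iffI)
  fix k
  assume "sd_cover (power_cx L n) L' (map (\<lambda>i. \<phi> \<circ> (\<lambda>x. x ! i)) [0..<n]) k"
  from sd_cover_postcomp[OF \<gamma> this]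
  have cover: "sd_cover (power_cx L n) L (map (\<lambda>i. \<gamma> \<circ> \<phi> \<circ> (\<lambda>x. x ! i)) [0..<n]) k"
    by (simp add: comp_def)
  have homot: "simp_homot (power_cx L n) L (\<gamma> \<circ> \<phi> \<circ> (\<lambda>x. x ! i)) (\<lambda>x. x ! i)"
    if i: "i < n" for i
    using simp_homot_comp_right[OF simp_map_nth_power_cx[OF i] \<gamma>\<phi>] by simp
  show "sd_cover (power_cx L n) L (map (\<lambda>i x. x ! i) [0..<n]) k"
    by (rule sd_cover_homot[OF cover]) (simp add: homot)
next
  fix k
  assume "sd_cover (power_cx L n) L (map (\<lambda>i x. x ! i) [0..<n]) k"
  from sd_cover_postcomp[OF \<phi> this]
  show "sd_cover (power_cx L n) L' (map (\<lambda>i. \<phi> \<circ> (\<lambda>x. x ! i)) [0..<n]) k"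
    by (simp add: comp_def)
qed

theorem corollary5p5:
  fixes L :: "'a set set" and L' :: "'b set set" and \<phi> :: "'a \<Rightarrow> 'b" and n :: nat
  assumes "finite_complex L" and "finite_complex L'"
    and "simp_map L L' \<phi>" and "\<phi> ` VX L = VX L'"
    and "finite_fibration L L' \<phi>"
    and "n \<ge> 2"
  shows "(\<forall>\<omega>. simp_map L' L \<omega> \<and> simp_homot L' L' (\<phi> \<circ> \<omega>) id \<longrightarrow> TC_map n L L' \<phi> = TC n L')
       \<and> (\<forall>\<gamma>. simp_map L' L \<gamma> \<and> simp_homot L L (\<gamma> \<circ> \<phi>) id \<longrightarrow> TC_map n L L' \<phi> = TC n L)
       \<and> (strong_equivalence L L' \<phi> \<longrightarrow> TC_map n L L' \<phi> = TC n L \<and> TC n L = TC n L')"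
proof -
  have L: "raw_complex L" and L': "raw_complex L'"
    using assms(1,2) by (simp_all add: finite_complex_def complex_def)
  note codomain = TC_map_eq_TC_codomain[OF L L' assms(3)]
  note domain = TC_map_eq_TC_domain[OF L assms(3)]
  show ?thesis
    unfolding strong_equivalence_def using codomain domain by metis
qed

end
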